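(* Let $\Theta$ be a finite set, let $P_1,\dots,P_m$ be experiments, and let $(A,u)$ be a decision problem admitting a weak decomposition $(A_1,u_1),\dots,(A_k,u_k)$. Then $$V(P_1,\dots,P_m;(A,u))\ge\sum_{\ell=1}^kV(P_1,\dots,P_m;(A_\ell,u_\ell)).$$
   Context: $\Theta$ is a finite set of states. A decision problem is a pair $(A,u)$ with $A$ a finite nonempty action set and $u:\Theta\times A\to\mathbb{R}$; for $\alpha\in\Delta(A)$ write $u(\theta,\alpha)=\sum_a\alpha(a)u(\theta,a)$. An experiment is a map $P:\Theta\to\Delta(Y)$ with $Y$ a finite signal set. Given experiments $P_j:\Theta\to\Delta(Y_j)$, $j=1,\dots,m$, let $\mathbf Y=Y_1\times\cdots\times Y_m$ and let $\mathcal P(P_1,\dots,P_m)$ be the set of experiments $P:\Theta\to\Delta(\mathbf Y)$ whose $j$-th marginal is $P_j(\cdot|\theta)$ for every $\theta$ and $j$. A strategy is a map $\sigma:\mathbf Y\to\Delta(A)$. Define $V(P_1,\dots,P_m;(A,u))=\max_{\sigma}\min_{P\in\mathcal P(P_1,\dots,P_m)}\sum_{\theta}\sum_{\mathbf y}P(\mathbf y|\theta)u(\theta,\sigma(\mathbf y))$. The composition $\bigoplus_{\ell=1}^k(A_\ell,u_\ell)$ is the decision problem with action set $A_1\times\cdots\times A_k$ and utility $u(\theta,(a_1,\dots,a_k))=\sum_\ell u_\ell(\theta,a_\ell)$. For a decision problem let $\mathcal H(A,u)=\mathrm{co}\{u(\cdot,a):a\in A\}-\mathbb{R}_+^{\Theta}$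 (Minkowski difference). A decision problem $(A,u)$ admits a weak decomposition $\{(A_\ell,u_\ell)\}_{\ell=1}^k$ if $\mathcal H(\bigoplus_{\ell=1}^k(A_\ell,u_\ell))\subseteq\mathcal H(A,u)$. *)

theory Defs
  imports "HOL-Analysis.Analysis"
begin

text \<open>States: a finite type 'th (Theta = UNIV). Signals of experiment j are a finite set
  Y j of a common carrier type 'y; joint signals are the extensional functions
  PiE {..<m} Y (i.e. tuples (y 0, ..., y (m-1))).\<close>

definition is_dist :: "'x set \<Rightarrow> ('x \<Rightarrow> real) \<Rightarrow> bool" where
  "is_dist S p \<longleftrightarrow> (\<forall>x\<in>S. 0 \<le> p x) \<and> sum p S = 1"

definition is_experiment :: "'y set \<Rightarrow> ('th \<Rightarrow> 'y \<Rightarrow> real) \<Rightarrow> bool" where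
  "is_experiment Y P \<longleftrightarrow> finite Y \<and> (\<forall>\<theta>. is_dist Y (P \<theta>))"

definition joint_signals :: "nat \<Rightarrow> (nat \<Rightarrow> 'y set) \<Rightarrow> (nat \<Rightarrow> 'y) set" where
  "joint_signals m Y = PiE {..<m} Y"

definition couplings ::
  "nat \<Rightarrow> (nat \<Rightarrow> 'y set) \<Rightarrow> (nat \<Rightarrow> 'th \<Rightarrow> 'y \<Rightarrow> real) \<Rightarrow> ('th \<Rightarrow> (nat \<Rightarrow> 'y) \<Rightarrow> real) set" where
  "couplings m Y P = {Q. (\<forall>\<theta>. is_dist (joint_signals m Y) (Q \<theta>)) \<and>
     (\<forall>\<theta>. \<forall>j<m. \<forall>y\<in>Y j.
        (\<Sum>ys\<in>{ys \<in> joint_signals m Y. ys j = y}. Q \<theta> ys) = P j \<theta> y)}"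

definition strategies :: "nat \<Rightarrow> (nat \<Rightarrow> 'y set) \<Rightarrow> 'a set \<Rightarrow> ((nat \<Rightarrow> 'y) \<Rightarrow> 'a \<Rightarrow> real) set" where
  "strategies m Y A = {\<sigma>. \<forall>ys\<in>joint_signals m Y. is_dist A (\<sigma> ys)}"

definition payoff ::
  "nat \<Rightarrow> (nat \<Rightarrow> 'y set) \<Rightarrow> 'a set \<Rightarrow> ('th::finite \<Rightarrow> 'a \<Rightarrow> real)
    \<Rightarrow> ('th \<Rightarrow> (nat \<Rightarrow> 'y) \<Rightarrow> real) \<Rightarrow> ((nat \<Rightarrow> 'y) \<Rightarrow> 'a \<Rightarrow> real) \<Rightarrow> real" where
  "payoff m Y A u Q \<sigma> =
     (\<Sum>\<theta>\<in>UNIV. \<Sum>ys\<in>joint_signals m Y. Q \<theta> ys * (\<Sum>a\<in>A. \<sigma> ys a * u \<theta> a))"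

definition V ::
  "nat \<Rightarrow> (nat \<Rightarrow> 'y set) \<Rightarrow> (nat \<Rightarrow> 'th::finite \<Rightarrow> 'y \<Rightarrow> real) \<Rightarrow> 'a set \<Rightarrow> ('th \<Rightarrow> 'a \<Rightarrow> real) \<Rightarrow> real" where
  "V m Y P A u = (SUP \<sigma>\<in>strategies m Y A. INF Q\<in>couplings m Y P. payoff m Y A u Q \<sigma>)"

definition comp_actions :: "nat \<Rightarrow> (nat \<Rightarrow> 'b set) \<Rightarrow> (nat \<Rightarrow> 'b) set" where
  "comp_actions k As = PiE {..<k} As"

definition comp_utility :: "nat \<Rightarrow> (nat \<Rightarrow> 'th \<Rightarrow> 'b \<Rightarrow> real) \<Rightarrow> 'th \<Rightarrow> (nat \<Rightarrow> 'b) \<Rightarrow> real" where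
  "comp_utility k us \<theta> a = (\<Sum>l<k. us l \<theta> (a l))"

definition Hset :: "'a set \<Rightarrow> ('th::finite \<Rightarrow> 'a \<Rightarrow> real) \<Rightarrow> (real^'th) set" where
  "Hset A u = {w - p | w p. w \<in> convex hull ((\<lambda>a. \<chi> \<theta>. u \<theta> a) ` A) \<and> (\<forall>\<theta>. 0 \<le> p $ \<theta>)}"

definition decision_problem :: "'a set \<Rightarrow> bool" where
  "decision_problem A \<longleftrightarrow> finite A \<and> A \<noteq> {}"

definition weak_decomposition ::
  "'a set \<Rightarrow> ('th::finite \<Rightarrow> 'a \<Rightarrow> real) \<Rightarrow> nat \<Rightarrow> (nat \<Rightarrow> 'b set) \<Rightarrow> (nat \<Rightarrow> 'th \<Rightarrow> 'b \<Rightarrow> real) \<Rightarrow> bool" where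
  "weak_decomposition A u k As us \<longleftrightarrow>
     (\<forall>l<k. decision_problem (As l)) \<and>
     Hset (comp_actions k As) (comp_utility k us) \<subseteq> Hset A u"

end

theory Submission
  imports Defs
begin

text \<open>Fix strategies for the component problems. At every joint signal, the vector of
  state-wise sums of the component payoffs lies in the convex hull of the payoff vectors of
  the composed problem; by the weak decomposition it is therefore dominated, state by state,
  by the payoff vector of some mixed action of (A, u). Playing such a mixed action at every
  signal yields a strategy whose payoff under every coupling is at least the sum of the
  component payoffs, so its guaranteed payoff is at least the sum of the guaranteed payoffs
  of the component strategies; taking suprema over these gives the inequality.\<close>

definition guaranteed_payoff ::
  "nat \<Rightarrow> (nat \<Rightarrow> 'y set) \<Rightarrow> (nat \<Rightarrow> 'th::finite \<Rightarrow> 'y \<Rightarrow> real) \<Rightarrow> 'a set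
    \<Rightarrow> ('th \<Rightarrow> 'a \<Rightarrow> real) \<Rightarrow> ((nat \<Rightarrow> 'y) \<Rightarrow> 'a \<Rightarrow> real) \<Rightarrow> real" where
  "guaranteed_payoff m Y P A u \<sigma> = (INF Q\<in>couplings m Y P. payoff m Y A u Q \<sigma>)"

lemma V_eq_SUP_guaranteed_payoff:
  "V m Y P A u = (SUP \<sigma>\<in>strategies m Y A. guaranteed_payoff m Y P A u \<sigma>)"
  by (simp add: V_def guaranteed_payoff_def)

lemma is_dist_point_mass:
  assumes "finite A" "a0 \<in> A"
  shows "is_dist A (\<lambda>a. if a = a0 then 1 else 0)"
  using assms by (simp add: is_dist_def)

lemma strategies_nonempty:
  assumes "decision_problem A"
  shows "strategies m Y A \<noteq> {}"
proof -
  obtain a0 where "a0 \<in> A" using assms by (auto simp: decision_problem_def)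
  with assms have "(\<lambda>ys a. if a = a0 then 1 else 0) \<in> strategies m Y A"
    by (auto simp: strategies_def decision_problem_def intro: is_dist_point_mass)
  then show ?thesis by blast
qed

lemma convex_hull_image_weights:
  fixes f :: "'a \<Rightarrow> 'v::real_vector"
  assumes "finite A" "x \<in> convex hull (f ` A)"
  obtains \<alpha> where "is_dist A \<alpha>" "x = (\<Sum>a\<in>A. \<alpha> a *\<^sub>R f a)"
proof -
  let ?C = "{y. \<exists>\<alpha>. is_dist A \<alpha> \<and> y = (\<Sum>a\<in>A. \<alpha> a *\<^sub>R f a)}"
  have "f ` A \<subseteq> ?C"
  proof
    fix y assume "y \<in> f ` A"
    then obtain a0 where a0: "a0 \<in> A" "y = f a0" by auto
    have "(\<Sum>a\<in>A. (if a = a0 then 1 else 0) *\<^sub>R f a) = (\<Sum>a\<in>A. if a = a0 then f a else 0)"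
      by (rule sum.cong) auto
    then have "y = (\<Sum>a\<in>A. (if a = a0 then 1 else 0) *\<^sub>R f a)"
      using a0 assms(1) by simp
    then show "y \<in> ?C" using is_dist_point_mass[OF assms(1) a0(1)] by blast
  qed
  moreover have "convex ?C"
  proof (rule convexI)
    fix y z :: 'v and t s :: real
    assume "y \<in> ?C" "z \<in> ?C" and ts: "0 \<le> t" "0 \<le> s" "t + s = 1"
    then obtain \<alpha> \<beta> where ab: "is_dist A \<alpha>" "y = (\<Sum>a\<in>A. \<alpha> a *\<^sub>R f a)"
      "is_dist A \<beta>" "z = (\<Sum>a\<in>A. \<beta> a *\<^sub>R f a)" by blast
    have "is_dist A (\<lambda>a. t * \<alpha> a + s * \<beta> a)"
      using ab ts by (simp add: is_dist_def sum.distrib sum_distrib_left[symmetric])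
    moreover have "t *\<^sub>R y + s *\<^sub>R z = (\<Sum>a\<in>A. (t * \<alpha> a + s * \<beta> a) *\<^sub>R f a)"
      using ab by (simp add: scaleR_sum_right scaleR_add_left sum.distrib)
    ultimately show "t *\<^sub>R y + s *\<^sub>R z \<in> ?C" by blast
  qed
  ultimately have "convex hull (f ` A) \<subseteq> ?C" by (rule hull_minimal)
  then show ?thesis using assms(2) that by blast
qed

lemma expected_utility_in_convex_hull:
  fixes u :: "'th::finite \<Rightarrow> 'a \<Rightarrow> real"
  assumes "finite A" "is_dist A \<alpha>"
  shows "(\<chi> \<theta>. \<Sum>a\<in>A. \<alpha> a * u \<theta> a) \<in> convex hull ((\<lambda>a. \<chi> \<theta>. u \<theta> a) ` A)"
proof -
  have "(\<chi> \<theta>. \<Sum>a\<in>A. \<alpha> a * u \<theta> a) = (\<Sum>a\<in>A. \<alpha> a *\<^sub>R (\<chi> \<theta>. u \<theta> a))"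
    by (simp add: vec_eq_iff)
  also have "\<dots> \<in> convex hull ((\<lambda>a. \<chi> \<theta>. u \<theta> a) ` A)"
    using assms by (intro convex_sum) (auto simp: is_dist_def intro: hull_inc)
  finally show ?thesis .
qed

lemma sum_in_convex_hull_PiE:
  fixes f :: "nat \<Rightarrow> 'b \<Rightarrow> 'v::real_vector"
  assumes "\<And>l. l < k \<Longrightarrow> x l \<in> convex hull (f l ` As l)"
  shows "(\<Sum>l<k. x l) \<in> convex hull ((\<lambda>a. \<Sum>l<k. f l (a l)) ` PiE {..<k} As)"
  using assms
proof (induction k)
  case 0
  then show ?case by (auto intro!: hull_inc)
next
  case (Suc k)
  let ?S = "(\<lambda>a. \<Sum>l<k. f l (a l)) ` PiE {..<k} As"
  have "(\<Sum>l<k. x l) + x k \<in> convex hull ?S + convex hull (f k ` As k)"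
    using Suc by (intro set_plus_intro) auto
  also have "\<dots> = convex hull (?S + f k ` As k)" by (simp add: convex_hull_set_plus)
  also have "\<dots> \<subseteq> convex hull ((\<lambda>a. \<Sum>l<Suc k. f l (a l)) ` PiE {..<Suc k} As)"
  proof (rule hull_mono, rule subsetI)
    fix z assume "z \<in> ?S + f k ` As k"
    then obtain a b where a: "a \<in> PiE {..<k} As" and b: "b \<in> As k"
      and z: "z = (\<Sum>l<k. f l (a l)) + f k b"
      by (auto simp: set_plus_def)
    have "a(k := b) \<in> PiE {..<Suc k} As"
      using a b by (auto simp: PiE_def extensional_def less_Suc_eq)
    moreover have "z = (\<Sum>l<Suc k. f l ((a(k := b)) l))"
      using z by simp
    ultimately show "z \<in> (\<lambda>a. \<Sum>l<Suc k. f l (a l)) ` PiE {..<Suc k} As" by blast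
  qed
  finally show ?case by simp
qed

lemma weak_decomposition_dominates:
  fixes u :: "'th::finite \<Rightarrow> 'a \<Rightarrow> real"
  assumes A: "decision_problem A" and wd: "weak_decomposition A u k As us"
    and \<beta>: "\<And>l. l < k \<Longrightarrow> is_dist (As l) (\<beta> l)"
  shows "\<exists>\<alpha>. is_dist A \<alpha> \<and> (\<forall>\<theta>. (\<Sum>l<k. \<Sum>b\<in>As l. \<beta> l b * us l \<theta> b) \<le> (\<Sum>a\<in>A. \<alpha> a * u \<theta> a))"
proof -
  define v where "v = (\<chi> \<theta>. \<Sum>l<k. \<Sum>b\<in>As l. \<beta> l b * us l \<theta> b)"
  have "\<And>l. l < k \<Longrightarrow> finite (As l)"
    using wd by (auto simp: weak_decomposition_def decision_problem_def)
  then have "(\<Sum>l<k. \<chi> \<theta>. \<Sum>b\<in>As l. \<beta> l b * us l \<theta> b)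
      \<in> convex hull ((\<lambda>a. \<Sum>l<k. \<chi> \<theta>. us l \<theta> (a l)) ` PiE {..<k} As)"
    using \<beta> by (intro sum_in_convex_hull_PiE expected_utility_in_convex_hull)
  moreover have "(\<Sum>l<k. \<chi> \<theta>. \<Sum>b\<in>As l. \<beta> l b * us l \<theta> b) = v"
    "(\<lambda>a. \<Sum>l<k. \<chi> \<theta>. us l \<theta> (a l)) = (\<lambda>a. \<chi> \<theta>. comp_utility k us \<theta> a)"
    by (simp_all add: v_def comp_utility_def vec_eq_iff fun_eq_iff sum_component)
  ultimately have "v \<in> convex hull ((\<lambda>a. \<chi> \<theta>. comp_utility k us \<theta> a) ` comp_actions k As)"
    unfolding comp_actions_def by metis
  then have "v \<in> Hset (comp_actions k As) (comp_utility k us)"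
    unfolding Hset_def by (intro CollectI exI[of _ v] exI[of _ 0]) auto
  then have "v \<in> Hset A u" using wd by (auto simp: weak_decomposition_def)
  then obtain w p where wp: "v = w - p" "w \<in> convex hull ((\<lambda>a. \<chi> \<theta>. u \<theta> a) ` A)"
    "\<forall>\<theta>. 0 \<le> p $ \<theta>" unfolding Hset_def by blast
  obtain \<alpha> where \<alpha>: "is_dist A \<alpha>" "w = (\<Sum>a\<in>A. \<alpha> a *\<^sub>R (\<chi> \<theta>. u \<theta> a))"
    using A wp(2) by (auto simp: decision_problem_def elim: convex_hull_image_weights)
  have "v $ \<theta> \<le> (\<Sum>a\<in>A. \<alpha> a * u \<theta> a)" for \<theta>
    using wp \<alpha>(2) by (simp add: sum_component)
  then show ?thesis using \<alpha>(1) by (auto simp: v_def)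
qed

lemma weak_decomposition_dominating_strategy:
  fixes u :: "'th::finite \<Rightarrow> 'a \<Rightarrow> real"
  assumes "decision_problem A" "weak_decomposition A u k As us"
    and s: "\<And>l. l < k \<Longrightarrow> s l \<in> strategies m Y (As l)"
  obtains \<sigma> where "\<sigma> \<in> strategies m Y A"
    "\<And>ys \<theta>. ys \<in> joint_signals m Y \<Longrightarrow>
      (\<Sum>l<k. \<Sum>b\<in>As l. s l ys b * us l \<theta> b) \<le> (\<Sum>a\<in>A. \<sigma> ys a * u \<theta> a)"
proof -
  have "\<forall>ys\<in>joint_signals m Y. \<exists>\<alpha>. is_dist A \<alpha> \<and>
      (\<forall>\<theta>. (\<Sum>l<k. \<Sum>b\<in>As l. s l ys b * us l \<theta> b) \<le> (\<Sum>a\<in>A. \<alpha> a * u \<theta> a))"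
    using s by (auto simp: strategies_def intro!: weak_decomposition_dominates[OF assms(1,2)])
  then obtain \<sigma> where \<sigma>: "\<forall>ys\<in>joint_signals m Y. is_dist A (\<sigma> ys) \<and>
      (\<forall>\<theta>. (\<Sum>l<k. \<Sum>b\<in>As l. s l ys b * us l \<theta> b) \<le> (\<Sum>a\<in>A. \<sigma> ys a * u \<theta> a))"
    by (auto dest: bchoice)
  then have "\<sigma> \<in> strategies m Y A" by (auto simp: strategies_def)
  with \<sigma> that show ?thesis by blast
qed

lemma product_experiment_in_couplings:
  assumes "\<forall>j<m. is_experiment (Y j) (P j)"
  shows "(\<lambda>\<theta> ys. \<Prod>j<m. P j \<theta> (ys j)) \<in> couplings m Y P"
proof -
  have fin: "\<And>j. j < m \<Longrightarrow> finite (Y j)" and d: "\<And>j \<theta>. j < m \<Longrightarrow> is_dist (Y j) (P j \<theta>)"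
    using assms by (auto simp: is_experiment_def)
  have "is_dist (joint_signals m Y) (\<lambda>ys. \<Prod>j<m. P j \<theta> (ys j))" for \<theta>
  proof -
    have "(\<Sum>ys\<in>joint_signals m Y. \<Prod>j<m. P j \<theta> (ys j)) = (\<Prod>j<m. \<Sum>y\<in>Y j. P j \<theta> y)"
      unfolding joint_signals_def using fin by (subst prod_sum_PiE) auto
    also have "\<dots> = 1" using d by (simp add: is_dist_def)
    finally show ?thesis using d
      by (auto simp: is_dist_def joint_signals_def PiE_def intro!: prod_nonneg)
  qed
  moreover have "(\<Sum>ys\<in>{ys \<in> joint_signals m Y. ys j = y}. \<Prod>i<m. P i \<theta> (ys i)) = P j \<theta> y"
    if j: "j < m" "y \<in> Y j" for \<theta> j y
  proof -
    have "{ys \<in> joint_signals m Y. ys j = y} = PiE {..<m} (Y(j := {y}))"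
      using j unfolding joint_signals_def by (auto simp: PiE_def Pi_def)
    then have "(\<Sum>ys\<in>{ys \<in> joint_signals m Y. ys j = y}. \<Prod>i<m. P i \<theta> (ys i))
        = (\<Prod>i<m. \<Sum>z\<in>(Y(j := {y})) i. P i \<theta> z)"
      using fin by (simp only:) (subst prod_sum_PiE; auto)
    also have "\<dots> = (\<Prod>i<m. if i = j then P j \<theta> y else 1)"
      using d by (intro prod.cong) (auto simp: is_dist_def)
    also have "\<dots> = P j \<theta> y" using j by (simp add: prod.delta)
    finally show ?thesis .
  qed
  ultimately show ?thesis unfolding couplings_def by auto
qed

lemma couplings_nonempty:
  "\<forall>j<m. is_experiment (Y j) (P j) \<Longrightarrow> couplings m Y P \<noteq> {}"
  using product_experiment_in_couplings by blast

lemma abs_expectation_le: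
  assumes "is_dist S p" "\<And>x. x \<in> S \<Longrightarrow> \<bar>f x\<bar> \<le> B"
  shows "\<bar>\<Sum>x\<in>S. p x * f x\<bar> \<le> B"
proof -
  have "\<bar>\<Sum>x\<in>S. p x * f x\<bar> \<le> (\<Sum>x\<in>S. p x * B)"
    using assms by (intro order_trans[OF sum_abs] sum_mono)
      (auto simp: is_dist_def abs_mult intro: mult_left_mono)
  also have "\<dots> = B" using assms(1) by (simp add: is_dist_def sum_distrib_right[symmetric])
  finally show ?thesis .
qed

lemma abs_payoff_le:
  fixes u :: "'th::finite \<Rightarrow> 'a \<Rightarrow> real" and B :: real
  assumes "Q \<in> couplings m Y P" "\<sigma> \<in> strategies m Y A" "\<And>\<theta> a. a \<in> A \<Longrightarrow> \<bar>u \<theta> a\<bar> \<le> B"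
  shows "\<bar>payoff m Y A u Q \<sigma>\<bar> \<le> CARD('th) * B"
proof -
  have state_bound: "\<bar>\<Sum>ys\<in>joint_signals m Y. Q \<theta> ys * (\<Sum>a\<in>A. \<sigma> ys a * u \<theta> a)\<bar> \<le> B" for \<theta>
    using assms by (intro abs_expectation_le)
      (auto simp: couplings_def strategies_def intro: abs_expectation_le)
  have "\<bar>payoff m Y A u Q \<sigma>\<bar> \<le> (\<Sum>\<theta>\<in>(UNIV::'th set). B)"
    unfolding payoff_def by (rule order_trans[OF sum_abs]) (intro sum_mono state_bound)
  then show ?thesis by simp
qed

lemma payoff_bounds:
  fixes u :: "'th::finite \<Rightarrow> 'a \<Rightarrow> real"
  assumes "\<forall>j<m. is_experiment (Y j) (P j)" "finite A" "\<sigma> \<in> strategies m Y A"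
  defines "B \<equiv> CARD('th) * (\<Sum>\<theta>\<in>UNIV. \<Sum>a\<in>A. \<bar>u \<theta> a\<bar>)"
  shows bdd_below_payoff: "bdd_below ((\<lambda>Q. payoff m Y A u Q \<sigma>) ` couplings m Y P)"
    and abs_guaranteed_payoff_le: "\<bar>guaranteed_payoff m Y P A u \<sigma>\<bar> \<le> B"
proof -
  have bound: "\<bar>u \<theta> a\<bar> \<le> (\<Sum>\<theta>\<in>UNIV. \<Sum>a\<in>A. \<bar>u \<theta> a\<bar>)" if "a \<in> A" for \<theta> a
    using assms(2) that
    by (intro order_trans[OF member_le_sum member_le_sum[of \<theta>]]) (auto intro: sum_nonneg)
  have pb: "\<bar>payoff m Y A u Q \<sigma>\<bar> \<le> B" if "Q \<in> couplings m Y P" for Q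
    unfolding B_def using that assms(3) bound by (rule abs_payoff_le)
  show bb: "bdd_below ((\<lambda>Q. payoff m Y A u Q \<sigma>) ` couplings m Y P)"
    using pb by (intro bdd_belowI[of _ "- B"]) (force simp: abs_le_iff)
  obtain Q0 where Q0: "Q0 \<in> couplings m Y P" using couplings_nonempty[OF assms(1)] by blast
  have "- B \<le> guaranteed_payoff m Y P A u \<sigma>"
    unfolding guaranteed_payoff_def using pb Q0
    by (intro cINF_greatest) (force simp: abs_le_iff)+
  moreover have "guaranteed_payoff m Y P A u \<sigma> \<le> B"
    unfolding guaranteed_payoff_def using pb[OF Q0]
    by (intro cINF_lower2[OF bb Q0]) (simp add: abs_le_iff)
  ultimately show "\<bar>guaranteed_payoff m Y P A u \<sigma>\<bar> \<le> B" by (simp add: abs_le_iff)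
qed

lemma bdd_above_guaranteed_payoff:
  fixes u :: "'th::finite \<Rightarrow> 'a \<Rightarrow> real"
  assumes "\<forall>j<m. is_experiment (Y j) (P j)" "finite A"
  shows "bdd_above (guaranteed_payoff m Y P A u ` strategies m Y A)"
  using abs_guaranteed_payoff_le[OF assms]
  by (intro bdd_aboveI[of _ "CARD('th) * (\<Sum>\<theta>\<in>UNIV. \<Sum>a\<in>A. \<bar>u \<theta> a\<bar>)"]) (force simp: abs_le_iff)

lemma guaranteed_payoff_le_V:
  assumes "\<forall>j<m. is_experiment (Y j) (P j)" "finite A" "\<sigma> \<in> strategies m Y A"
  shows "guaranteed_payoff m Y P A u \<sigma> \<le> V m Y P A u"
  unfolding V_eq_SUP_guaranteed_payoff
  using assms by (intro cSUP_upper bdd_above_guaranteed_payoff)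

lemma sum_payoff_eq:
  "(\<Sum>l<k. payoff m Y (As l) (us l) Q (s l)) =
    (\<Sum>\<theta>\<in>UNIV. \<Sum>ys\<in>joint_signals m Y. Q \<theta> ys * (\<Sum>l<k. \<Sum>b\<in>As l. s l ys b * us l \<theta> b))"
  unfolding payoff_def
  by (simp add: sum_distrib_left sum.swap[of _ "{..<k}"] sum.swap[of _ "{..<k}" "joint_signals m Y"])

lemma sum_guaranteed_payoff_le_V:
  fixes u :: "'th::finite \<Rightarrow> 'a \<Rightarrow> real"
  assumes exp: "\<forall>j<m. is_experiment (Y j) (P j)" and A: "decision_problem A"
    and wd: "weak_decomposition A u k As us"
    and s: "\<And>l. l < k \<Longrightarrow> s l \<in> strategies m Y (As l)"
  shows "(\<Sum>l<k. guaranteed_payoff m Y P (As l) (us l) (s l)) \<le> V m Y P A u"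
proof -
  obtain \<sigma> where \<sigma>: "\<sigma> \<in> strategies m Y A"
    and dom: "\<And>ys \<theta>. ys \<in> joint_signals m Y \<Longrightarrow>
      (\<Sum>l<k. \<Sum>b\<in>As l. s l ys b * us l \<theta> b) \<le> (\<Sum>a\<in>A. \<sigma> ys a * u \<theta> a)"
    using weak_decomposition_dominating_strategy[OF A wd s] by blast
  have finAs: "\<And>l. l < k \<Longrightarrow> finite (As l)"
    using wd by (auto simp: weak_decomposition_def decision_problem_def)
  have "(\<Sum>l<k. guaranteed_payoff m Y P (As l) (us l) (s l)) \<le> payoff m Y A u Q \<sigma>"
    if Q: "Q \<in> couplings m Y P" for Q
  proof -
    have "(\<Sum>l<k. guaranteed_payoff m Y P (As l) (us l) (s l))
        \<le> (\<Sum>l<k. payoff m Y (As l) (us l) Q (s l))"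
      unfolding guaranteed_payoff_def
      using s finAs Q by (intro sum_mono cINF_lower bdd_below_payoff[OF exp]) auto
    also have "\<dots> \<le> payoff m Y A u Q \<sigma>"
      unfolding sum_payoff_eq unfolding payoff_def using Q dom
      by (intro sum_mono mult_left_mono) (auto simp: couplings_def is_dist_def)
    finally show ?thesis .
  qed
  then have "(\<Sum>l<k. guaranteed_payoff m Y P (As l) (us l) (s l)) \<le> guaranteed_payoff m Y P A u \<sigma>"
    unfolding guaranteed_payoff_def[of m Y P A u]
    using couplings_nonempty[OF exp] by (intro cINF_greatest) auto
  also have "\<dots> \<le> V m Y P A u"
    using A by (intro guaranteed_payoff_le_V[OF exp _ \<sigma>]) (simp add: decision_problem_def)
  finally show ?thesis .
qed

lemma sum_SUP_le:
  fixes g :: "'i \<Rightarrow> 'x \<Rightarrow> real"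
  assumes "finite I" and ne: "\<And>i. i \<in> I \<Longrightarrow> S i \<noteq> {}"
    and bdd: "\<And>i. i \<in> I \<Longrightarrow> bdd_above (g i ` S i)"
    and le: "\<And>s. (\<And>i. i \<in> I \<Longrightarrow> s i \<in> S i) \<Longrightarrow> (\<Sum>i\<in>I. g i (s i)) \<le> C"
  shows "(\<Sum>i\<in>I. SUP x\<in>S i. g i x) \<le> C"
proof (rule field_le_epsilon)
  fix e :: real assume "0 < e"
  define \<epsilon> where "\<epsilon> = e / (real (card I) + 1)"
  have \<epsilon>: "0 < \<epsilon>" "real (card I) * \<epsilon> \<le> e"
    using \<open>0 < e\<close> by (auto simp: \<epsilon>_def field_simps)
  have "\<exists>x\<in>S i. (SUP x\<in>S i. g i x) - \<epsilon> < g i x" if "i \<in> I" for i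
    using ne[OF that] bdd[OF that] \<epsilon>(1) by (subst less_cSUP_iff[symmetric]) auto
  then obtain s where s: "\<And>i. i \<in> I \<Longrightarrow> s i \<in> S i \<and> (SUP x\<in>S i. g i x) - \<epsilon> < g i (s i)"
    by metis
  have "(\<Sum>i\<in>I. SUP x\<in>S i. g i x) - real (card I) * \<epsilon> = (\<Sum>i\<in>I. (SUP x\<in>S i. g i x) - \<epsilon>)"
    by (simp add: sum_subtractf)
  also have "\<dots> \<le> (\<Sum>i\<in>I. g i (s i))"
    using s by (intro sum_mono) (auto intro: less_imp_le)
  also have "\<dots> \<le> C" using s by (intro le) blast
  finally show "(\<Sum>i\<in>I. SUP x\<in>S i. g i x) \<le> C + e" using \<epsilon>(2) by linarith
qed

theorem lemma7:
  fixes m k :: nat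
    and Y :: "nat \<Rightarrow> 'y set"
    and P :: "nat \<Rightarrow> 'th::finite \<Rightarrow> 'y \<Rightarrow> real"
    and A :: "'a set" and u :: "'th \<Rightarrow> 'a \<Rightarrow> real"
    and As :: "nat \<Rightarrow> 'b set" and us :: "nat \<Rightarrow> 'th \<Rightarrow> 'b \<Rightarrow> real"
  assumes "\<forall>j<m. is_experiment (Y j) (P j)"
    and "decision_problem A"
    and "weak_decomposition A u k As us"
  shows "V m Y P A u \<ge> (\<Sum>l<k. V m Y P (As l) (us l))"
proof -
  have components: "decision_problem (As l)" if "l < k" for l
    using assms(3) that by (simp add: weak_decomposition_def)
  have "(\<Sum>l<k. SUP \<sigma>\<in>strategies m Y (As l). guaranteed_payoff m Y P (As l) (us l) \<sigma>)
      \<le> V m Y P A u"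
  proof (rule sum_SUP_le)
    show "\<And>l. l \<in> {..<k} \<Longrightarrow> strategies m Y (As l) \<noteq> {}"
      using components strategies_nonempty by blast
    show "\<And>l. l \<in> {..<k} \<Longrightarrow> bdd_above (guaranteed_payoff m Y P (As l) (us l) ` strategies m Y (As l))"
      using components assms(1)
      by (auto simp: decision_problem_def intro: bdd_above_guaranteed_payoff)
    show "\<And>s. (\<And>l. l \<in> {..<k} \<Longrightarrow> s l \<in> strategies m Y (As l)) \<Longrightarrow>
        (\<Sum>l<k. guaranteed_payoff m Y P (As l) (us l) (s l)) \<le> V m Y P A u"
      using sum_guaranteed_payoff_le_V[OF assms] by blast
  qed simp
  then show ?thesis by (simp add: V_eq_SUP_guaranteed_payoff)
qed

end
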